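(* Let $G$ be a connected chordal graph with at least two vertices. A vertex $v\in V(G)$ is an $\mathcal{F}$-branch leaf of some perfect elimination ordering of $G$ if and only if the induced subgraph $G[N_G(v)]$ has a dominating clique.
   Context: Graphs are finite, simple, undirected; $N_G(v)$ is the open neighborhood of $v$. A graph is chordal if it has no induced cycle of length at least 4. A clique $C$ of a graph $H$ is dominating if every vertex of $H$ is in $C$ or has a neighbor in $C$. A vertex ordering $\sigma$ of $G$ (a bijection $\{1,\dots,n\}\to V(G)$, with $u\prec_\sigma w$ meaning $u$ comes before $w$) is a perfect elimination ordering (PEO) if for every vertex $v$ the neighbors of $v$ that precede $v$ in $\sigma$ form a clique. For an ordering $\sigma$ of a connected graph in which every vertex other than $\sigma(1)$ has a neighbor to its left (as is the case for PEOs of connected chordal graphs), the $\mathcal{F}$-tree of $\sigma$ is the spanning tree containing, for each $v\neq\sigma(1)$, the edge from $v$ to its leftmost neighbor in $\sigma$. A vertex $v\neq\sigma(1)$ that is a leaf of the $\mathcal{F}$-tree is an $\mathcal{F}$-branch leaf of $\sigma$. *)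

theory Defs
  imports Main
begin

definition graph :: "'a set \<Rightarrow> ('a \<Rightarrow> 'a \<Rightarrow> bool) \<Rightarrow> bool" where
  "graph V E \<longleftrightarrow> finite V \<and> (\<forall>u w. E u w \<longrightarrow> u \<in> V \<and> w \<in> V)
     \<and> (\<forall>u w. E u w \<longrightarrow> E w u) \<and> (\<forall>u. \<not> E u u)"

definition connected_graph :: "'a set \<Rightarrow> ('a \<Rightarrow> 'a \<Rightarrow> bool) \<Rightarrow> bool" where
  "connected_graph V E \<longleftrightarrow> (\<forall>u\<in>V. \<forall>w\<in>V. E\<^sup>*\<^sup>* u w)"

definition induced_cycle :: "'a set \<Rightarrow> ('a \<Rightarrow> 'a \<Rightarrow> bool) \<Rightarrow> 'a list \<Rightarrow> bool" where
  "induced_cycle V E cs \<longleftrightarrow> distinct cs \<and> set cs \<subseteq> V \<and> length cs \<ge> 3 \<and>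
     (\<forall>i < length cs. \<forall>j < length cs. i \<noteq> j \<longrightarrow>
        (E (cs ! i) (cs ! j) \<longleftrightarrow> j = Suc i mod length cs \<or> i = Suc j mod length cs))"

definition chordal :: "'a set \<Rightarrow> ('a \<Rightarrow> 'a \<Rightarrow> bool) \<Rightarrow> bool" where
  "chordal V E \<longleftrightarrow> \<not> (\<exists>cs. induced_cycle V E cs \<and> length cs \<ge> 4)"

definition nbhd :: "('a \<Rightarrow> 'a \<Rightarrow> bool) \<Rightarrow> 'a \<Rightarrow> 'a set" where
  "nbhd E v = {u. E v u}"

definition is_clique :: "('a \<Rightarrow> 'a \<Rightarrow> bool) \<Rightarrow> 'a set \<Rightarrow> bool" where
  "is_clique E C \<longleftrightarrow> (\<forall>x\<in>C. \<forall>y\<in>C. x \<noteq> y \<longrightarrow> E x y)"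

definition dominating_clique :: "'a set \<Rightarrow> ('a \<Rightarrow> 'a \<Rightarrow> bool) \<Rightarrow> 'a set \<Rightarrow> bool" where
  "dominating_clique W E C \<longleftrightarrow> C \<subseteq> W \<and> is_clique E C \<and>
     (\<forall>w\<in>W. w \<in> C \<or> (\<exists>c\<in>C. E w c))"

definition has_dominating_clique :: "'a set \<Rightarrow> ('a \<Rightarrow> 'a \<Rightarrow> bool) \<Rightarrow> bool" where
  "has_dominating_clique W E \<longleftrightarrow> (\<exists>C. dominating_clique W E C)"

definition vertex_ordering :: "'a set \<Rightarrow> (nat \<Rightarrow> 'a) \<Rightarrow> bool" where
  "vertex_ordering V \<sigma> \<longleftrightarrow> bij_betw \<sigma> {1..card V} V"

definition peo :: "'a set \<Rightarrow> ('a \<Rightarrow> 'a \<Rightarrow> bool) \<Rightarrow> (nat \<Rightarrow> 'a) \<Rightarrow> bool" where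
  "peo V E \<sigma> \<longleftrightarrow> vertex_ordering V \<sigma> \<and>
     (\<forall>i\<in>{1..card V}. is_clique E {\<sigma> j | j. j \<in> {1..card V} \<and> j < i \<and> E (\<sigma> i) (\<sigma> j)})"

definition leftmost_nbr :: "'a set \<Rightarrow> ('a \<Rightarrow> 'a \<Rightarrow> bool) \<Rightarrow> (nat \<Rightarrow> 'a) \<Rightarrow> 'a \<Rightarrow> 'a" where
  "leftmost_nbr V E \<sigma> w = \<sigma> (LEAST j. j \<in> {1..card V} \<and> E w (\<sigma> j))"

definition F_tree_edges :: "'a set \<Rightarrow> ('a \<Rightarrow> 'a \<Rightarrow> bool) \<Rightarrow> (nat \<Rightarrow> 'a) \<Rightarrow> 'a set set" where
  "F_tree_edges V E \<sigma> = {{w, leftmost_nbr V E \<sigma> w} | w. w \<in> V \<and> w \<noteq> \<sigma> 1}"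

definition F_branch_leaf :: "'a set \<Rightarrow> ('a \<Rightarrow> 'a \<Rightarrow> bool) \<Rightarrow> (nat \<Rightarrow> 'a) \<Rightarrow> 'a \<Rightarrow> bool" where
  "F_branch_leaf V E \<sigma> v \<longleftrightarrow> v \<in> V \<and> v \<noteq> \<sigma> 1 \<and>
     card {e \<in> F_tree_edges V E \<sigma>. v \<in> e} = 1"

end

(*
  Let sigma be a perfect elimination ordering (PEO) with sigma i = v and let C be the set of left
  neighbours of v, a clique. In a PEO of a connected graph every vertex except sigma 1 has a left
  neighbour: the prefixes of a PEO induce connected subgraphs, because deleting a simplicial
  vertex preserves connectivity. If v is an F-branch leaf, its only F-tree edge goes to its own
  leftmost neighbour, so no later neighbour u of v has v as its leftmost neighbour. The leftmost
  neighbour of u therefore lies left of v, and together with v in the clique of left neighbours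
  of u; hence it lies in C, and C dominates N(v).

  Conversely, every clique of a chordal graph can be put at the front of a PEO, since a chordal
  graph has a simplicial vertex outside any proper clique (Dirac's argument via a clique
  separator). With a dominating clique C of N(v) in front, every neighbour of v has a neighbour
  in C, hence a leftmost neighbour other than v, so v is a leaf of the F-tree.
*)

theory Submission
  imports Defs
begin

section \<open>Induced subgraphs and connectivity\<close>

definition induced :: "'a set \<Rightarrow> ('a \<Rightarrow> 'a \<Rightarrow> bool) \<Rightarrow> 'a \<Rightarrow> 'a \<Rightarrow> bool" where
  "induced W E u w \<longleftrightarrow> E u w \<and> u \<in> W \<and> w \<in> W"

lemma graph_finite: "graph V E \<Longrightarrow> finite V"
  and graph_edgeD: "graph V E \<Longrightarrow> E u w \<Longrightarrow> u \<in> V \<and> w \<in> V"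
  and graph_symD: "graph V E \<Longrightarrow> E u w \<Longrightarrow> E w u"
  and graph_irreflD: "graph V E \<Longrightarrow> \<not> E u u"
  unfolding graph_def by blast+

lemma graph_induced: "graph V E \<Longrightarrow> W \<subseteq> V \<Longrightarrow> graph W (induced W E)"
  unfolding graph_def induced_def by (auto intro: finite_subset)

lemma induced_graph_eq: "graph V E \<Longrightarrow> induced V E = E"
  unfolding induced_def graph_def by (auto simp: fun_eq_iff)

lemma induced_induced: "U \<subseteq> W \<Longrightarrow> induced U (induced W E) = induced U E"
  unfolding induced_def by (auto simp: fun_eq_iff)

lemma is_clique_subset: "is_clique E C \<Longrightarrow> D \<subseteq> C \<Longrightarrow> is_clique E D"
  unfolding is_clique_def by blast

lemma is_clique_induced_iff: "C \<subseteq> W \<Longrightarrow> is_clique (induced W E) C \<longleftrightarrow> is_clique E C"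
  unfolding is_clique_def induced_def by blast

lemma nbhd_induced: "x \<in> W \<Longrightarrow> nbhd E x \<subseteq> W \<Longrightarrow> nbhd (induced W E) x = nbhd E x"
  unfolding nbhd_def induced_def by auto

lemma chordal_induced:
  assumes "chordal V E" "W \<subseteq> V"
  shows "chordal W (induced W E)"
proof -
  have "induced_cycle V E cs" if "induced_cycle W (induced W E) cs" for cs
  proof -
    have "set cs \<subseteq> W" using that unfolding induced_cycle_def by auto
    then have "induced W E (cs ! i) (cs ! j) = E (cs ! i) (cs ! j)"
      if "i < length cs" "j < length cs" for i j
      using that nth_mem unfolding induced_def by blast
    with \<open>set cs \<subseteq> W\<close> show ?thesis using that assms(2) unfolding induced_cycle_def by auto
  qed
  then show ?thesis using assms(1) unfolding chordal_def by blast
qed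

lemma rtranclp_induced_reachable:
  assumes "(induced W E)\<^sup>*\<^sup>* b z"
  shows "(induced {z. (induced W E)\<^sup>*\<^sup>* b z} E)\<^sup>*\<^sup>* b z"
  using assms
proof (induction rule: rtranclp_induct)
  case (step y z)
  then have "induced {z. (induced W E)\<^sup>*\<^sup>* b z} E y z"
    unfolding induced_def by (auto intro: rtranclp.rtrancl_into_rtrancl)
  with step.IH show ?case by (rule rtranclp.rtrancl_into_rtrancl)
qed simp

lemma graph_remove_simplicial_connected:
  assumes g: "graph V E" and con: "connected_graph V E"
    and simplicial: "is_clique E (nbhd E x)"
  shows "connected_graph (V - {x}) (induced (V - {x}) E)"
  unfolding connected_graph_def
proof (intro ballI)
  fix u w assume u: "u \<in> V - {x}" and w: "w \<in> V - {x}"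
  let ?R = "induced (V - {x}) E"
  \<comment> \<open>A walk from u that enters x leaves it to another neighbour of x, and any two
    neighbours of x are adjacent, so x can be bypassed.\<close>
  have "(z \<noteq> x \<longrightarrow> ?R\<^sup>*\<^sup>* u z) \<and> (z = x \<longrightarrow> (\<exists>y. E x y \<and> ?R\<^sup>*\<^sup>* u y))"
    if "E\<^sup>*\<^sup>* u z" for z
    using that
  proof (induction rule: rtranclp_induct)
    case base
    then show ?case using u by simp
  next
    case (step z z')
    have zz': "z \<in> V" "z' \<in> V" using graph_edgeD[OF g step.hyps(2)] by auto
    consider "z \<noteq> x" "z' \<noteq> x" | "z \<noteq> x" "z' = x" | "z = x" "z' \<noteq> x" | "z = x" "z' = x"
      by blast
    then show ?case
    proof cases
      case 1
      then have "?R z z'" using zz' step.hyps(2) unfolding induced_def by simp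
      then show ?thesis using 1 step.IH by (auto intro: rtranclp.rtrancl_into_rtrancl)
    next
      case 2
      then show ?thesis using step.IH graph_symD[OF g step.hyps(2)] by auto
    next
      case 3
      then obtain y where y: "E x y" "?R\<^sup>*\<^sup>* u y" using step.IH by blast
      have "y = z' \<or> E y z'"
        using simplicial y(1) step.hyps(2) 3(1) unfolding is_clique_def nbhd_def by blast
      moreover have "y \<in> V - {x}" using graph_edgeD[OF g y(1)] graph_irreflD[OF g] y(1) by blast
      ultimately show ?thesis
        using 3 y(2) zz' unfolding induced_def by (auto intro: rtranclp.rtrancl_into_rtrancl)
    next
      case 4
      then show ?thesis using step.IH by simp
    qed
  qed
  then show "?R\<^sup>*\<^sup>* u w" using con u w unfolding connected_graph_def by blast
qed

lemma connected_graph_ex_nbr: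
  assumes "connected_graph V E" "2 \<le> card V" "w \<in> V"
  shows "\<exists>z. E w z"
proof -
  have "\<not> V \<subseteq> {w}" using assms(2) card_mono[of "{w}" V] by auto
  then obtain w' where "w' \<in> V" "w' \<noteq> w" by blast
  then have "E\<^sup>*\<^sup>* w w'" using assms(1,3) unfolding connected_graph_def by blast
  then show ?thesis using \<open>w' \<noteq> w\<close> by (cases rule: converse_rtranclpE) auto
qed

section \<open>Clique separators and simplicial vertices of chordal graphs\<close>

definition walk_via :: "('a \<Rightarrow> 'a \<Rightarrow> bool) \<Rightarrow> 'a set \<Rightarrow> 'a \<Rightarrow> 'a \<Rightarrow> nat \<Rightarrow> (nat \<Rightarrow> 'a) \<Rightarrow> bool" where
  "walk_via E B x y k p \<longleftrightarrow> p 0 = x \<and> p k = y \<and> (\<forall>m<k. E (p m) (p (Suc m))) \<and>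
     (\<forall>m. 0 < m \<and> m < k \<longrightarrow> p m \<in> B)"

lemma walk_via_snoc:
  assumes "walk_via E B x w k p" "E w z" "k = 0 \<or> w \<in> B"
  shows "walk_via E B x z (Suc k) (p(Suc k := z))"
  using assms unfolding walk_via_def by (auto simp: less_Suc_eq)

lemma rtranclp_induced_imp_walk_via:
  assumes "(induced B E)\<^sup>*\<^sup>* u w" "E x u"
  shows "\<exists>k p. walk_via E B x w (Suc k) p"
  using assms(1)
proof (induction rule: rtranclp_induct)
  case base
  have "walk_via E B x x 0 (\<lambda>_. x)" unfolding walk_via_def by simp
  from walk_via_snoc[OF this assms(2)] show ?case by blast
next
  case (step y z)
  then obtain k p where "walk_via E B x y (Suc k) p" by blast
  from walk_via_snoc[OF this] step.hyps(2) show ?case unfolding induced_def by blast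
qed

lemma walk_via_shortcut:
  assumes "walk_via E B x y k p" "j < l" "l \<le> k" "E (p j) (p l)"
  shows "walk_via E B x y (k - (l - j) + 1) (\<lambda>m. if m \<le> j then p m else p (m + (l - j - 1)))"
proof -
  have st: "E (p m) (p (Suc m))" if "m < k" for m using assms(1) that unfolding walk_via_def by blast
  have int: "p m \<in> B" if "0 < m" "m < k" for m using assms(1) that unfolding walk_via_def by blast
  show ?thesis unfolding walk_via_def
  proof (intro conjI allI impI)
    show "(if 0 \<le> j then p 0 else p (0 + (l - j - 1))) = x" using assms(1) unfolding walk_via_def by simp
    show "(if k - (l - j) + 1 \<le> j then p (k - (l - j) + 1) else p (k - (l - j) + 1 + (l - j - 1))) = y"
      using assms(1-3) unfolding walk_via_def by auto
  next
    fix m assume m: "m < k - (l - j) + 1"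
    consider "m < j" | "m = j" | "j < m" by linarith
    then show "E (if m \<le> j then p m else p (m + (l - j - 1)))
          (if Suc m \<le> j then p (Suc m) else p (Suc m + (l - j - 1)))"
    proof cases
      case 1 then show ?thesis using st[of m] assms by auto
    next
      case 2 then show ?thesis using assms(2,4) by auto
    next
      case 3 then show ?thesis using st[of "m + (l - j - 1)"] m assms(2,3) by auto
    qed
  next
    fix m assume "0 < m \<and> m < k - (l - j) + 1"
    then show "(if m \<le> j then p m else p (m + (l - j - 1))) \<in> B"
      using int[of m] int[of "m + (l - j - 1)"] assms(2,3) by auto
  qed
qed

lemma walk_via_chordless:
  assumes "walk_via E B x y k0 p0"
  obtains k p where "walk_via E B x y k p" "\<And>j l. Suc j < l \<Longrightarrow> l \<le> k \<Longrightarrow> \<not> E (p j) (p l)"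
proof -
  obtain k where k: "\<exists>p. walk_via E B x y k p"
    and kmin: "\<And>k'. k' < k \<Longrightarrow> \<not> (\<exists>p. walk_via E B x y k' p)"
    using assms exists_least_iff[of "\<lambda>k. \<exists>p. walk_via E B x y k p"] by blast
  then obtain p where p: "walk_via E B x y k p" by blast
  have "\<not> E (p j) (p l)" if "Suc j < l" "l \<le> k" for j l
  proof
    assume "E (p j) (p l)"
    from walk_via_shortcut[OF p _ that(2) this] that(1)
    have "\<exists>p. walk_via E B x y (k - (l - j) + 1) p" by auto
    moreover have "k - (l - j) + 1 < k" using that by linarith
    ultimately show False using kmin by blast
  qed
  with p show thesis using that by blast
qed

lemma induced_cycle_cone:
  assumes sym: "\<And>u w. E u w \<Longrightarrow> E w u"
    and k: "2 \<le> k" and inj: "inj_on p {..k}" and pV: "p ` {..k} \<subseteq> V"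
    and aV: "a \<in> V" and ap: "a \<notin> p ` {..k}"
    and path: "\<And>i j. i \<le> k \<Longrightarrow> j \<le> k \<Longrightarrow> E (p i) (p j) \<longleftrightarrow> j = Suc i \<or> i = Suc j"
    and apex: "\<And>m. m \<le> k \<Longrightarrow> E a (p m) \<longleftrightarrow> m = 0 \<or> m = k"
  shows "induced_cycle V E (a # map p [0..<Suc k])"
proof -
  define cs where "cs = a # map p [0..<Suc k]"
  have len: "length cs = k + 2" unfolding cs_def by simp
  have cs0: "cs ! 0 = a" unfolding cs_def by simp
  have csS: "cs ! Suc i = p i" if "i \<le> k" for i
    unfolding cs_def using that by (simp del: upt_Suc add: nth_map_upt)
  have "induced_cycle V E cs"
    unfolding induced_cycle_def
  proof (intro conjI allI impI)
    have "inj_on p {0..<Suc k}" using inj by (simp add: atLeast0LessThan lessThan_Suc_atMost)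
    then show "distinct cs"
      using ap unfolding cs_def by (auto simp: distinct_map simp del: upt_Suc)
    show "set cs \<subseteq> V" unfolding cs_def using aV pV by (auto simp del: upt_Suc)
    show "3 \<le> length cs" using len k by simp
  next
    fix i j assume i: "i < length cs" and j: "j < length cs" and ij: "i \<noteq> j"
    have mod1: "Suc 0 mod (k + 2) = 1" using k by simp
    have mod_eq: "(Suc t = Suc (Suc s) mod (k + 2)) \<longleftrightarrow> t = Suc s"
      if "s \<le> k" "t \<le> k" for s t
      using that by (cases "s = k") auto
    have mod0: "(0 = Suc (Suc s) mod (k + 2)) \<longleftrightarrow> s = k" if "s \<le> k" for s
      using that by (cases "s = k") auto
    show "E (cs ! i) (cs ! j) = (j = Suc i mod length cs \<or> i = Suc j mod length cs)"
    proof (cases i; cases j)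
      fix j' assume ij': "i = 0" "j = Suc j'"
      then have "j' \<le> k" using j len by simp
      then show ?thesis using ij' len cs0 csS apex mod1 mod0 by simp
    next
      fix i' assume ij': "i = Suc i'" "j = 0"
      then have "i' \<le> k" using i len by simp
      then have "E (cs ! i) (cs ! j) \<longleftrightarrow> E a (p i')" using ij' cs0 csS sym by auto
      then show ?thesis using \<open>i' \<le> k\<close> ij' len apex mod1 mod0 by auto
    next
      fix i' j' assume ij': "i = Suc i'" "j = Suc j'"
      then have "i' \<le> k" "j' \<le> k" using i j len by simp_all
      then show ?thesis using ij' len csS path mod_eq by simp
    qed (use ij in simp)
  qed
  then show ?thesis unfolding cs_def .
qed

lemma chordal_walk_via_imp_adjacent:
  assumes g: "graph V E" and ch: "chordal V E" and aV: "a \<in> V"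
    and aB: "a \<notin> B" and naB: "\<forall>z\<in>B. \<not> E a z" and ax: "E a x" and ay: "E a y"
    and xB: "x \<notin> B" and yB: "y \<notin> B" and xy: "x \<noteq> y" and walk: "walk_via E B x y k0 p0"
  shows "E x y"
proof (rule ccontr)
  assume nxy: "\<not> E x y"
  \<comment> \<open>A shortest such walk is an induced path; together with a it forms an induced
    cycle of length at least 4.\<close>
  obtain k p where p: "walk_via E B x y k p"
    and chordless: "\<And>j l. Suc j < l \<Longrightarrow> l \<le> k \<Longrightarrow> \<not> E (p j) (p l)"
    using walk_via_chordless[OF walk] by blast
  have px: "p 0 = x" and py: "p k = y" and st: "\<And>m. m < k \<Longrightarrow> E (p m) (p (Suc m))"
    and int: "\<And>m. 0 < m \<Longrightarrow> m < k \<Longrightarrow> p m \<in> B"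
    using p unfolding walk_via_def by auto
  have k: "2 \<le> k"
  proof (rule ccontr)
    assume "\<not> 2 \<le> k"
    then have "k = 0 \<or> k = 1" by auto
    then show False using px py xy nxy st[of 0] by auto
  qed
  have apex: "E a (p m) \<longleftrightarrow> m = 0 \<or> m = k" if "m \<le> k" for m
    using that ax ay px py int[of m] naB by (cases "m = 0 \<or> m = k") auto
  have ap: "a \<notin> p ` {..k}"
  proof
    assume "a \<in> p ` {..k}"
    then obtain m where "m \<le> k" "p m = a" by auto
    then show False using apex[of m] int[of m] aB graph_irreflD[OF g, of a] by fastforce
  qed
  have "p m \<in> V" if "m \<le> k" for m
    using that st[of m] py ay graph_edgeD[OF g] by (cases "m < k") auto
  then have pV: "p ` {..k} \<subseteq> V" by auto
  have path: "E (p i) (p j) \<longleftrightarrow> j = Suc i \<or> i = Suc j" if "i \<le> k" "j \<le> k" for i j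
  proof -
    consider "Suc i < j" | "j = Suc i" | "i = j" | "i = Suc j" | "Suc j < i" by linarith
    then show ?thesis
      using that chordless[of i j] chordless[of j i] st[of i] st[of j] graph_symD[OF g]
        graph_irreflD[OF g] by cases auto
  qed
  have inj: "inj_on p {..k}"
  proof (rule inj_onI)
    have "p j \<noteq> p l" if "j < l" "l \<le> k" for j l
    proof
      assume eq: "p j = p l"
      show False
      proof (cases "l < k")
        case True
        then show False using path[of j "Suc l"] path[of l "Suc l"] eq that by auto
      next
        case False
        then have "p j = y" using eq py that by auto
        then show False using xy xB yB px int[of j] that by (cases "j = 0") auto
      qed
    qed
    then show "i = j" if "i \<in> {..k}" "j \<in> {..k}" "p i = p j" for i j
      using that by (metis atMost_iff linorder_neqE_nat)
  qed
  have "induced_cycle V E (a # map p [0..<Suc k])"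
    using induced_cycle_cone[OF _ k inj pV aV ap path apex] graph_symD[OF g] by blast
  moreover have "4 \<le> length (a # map p [0..<Suc k])" using k by simp
  ultimately show False using ch unfolding chordal_def by blast
qed

lemma chordal_clique_separator:
  assumes g: "graph V E" and ch: "chordal V E" and a: "a \<in> V" and b: "b \<in> V"
    and ab: "a \<noteq> b" "\<not> E a b"
  obtains A S B where "V = A \<union> S \<union> B" "A \<inter> S = {}" "A \<inter> B = {}" "S \<inter> B = {}"
    "a \<in> A" "b \<in> B" "\<forall>u\<in>A. \<forall>w\<in>B. \<not> E u w" "is_clique E S"
proof -
  \<comment> \<open>B is the component of b in G - N[a], and its outer boundary S lies in N(a).\<close>
  define W where "W = V - insert a (nbhd E a)"
  define B where "B = {z. (induced W E)\<^sup>*\<^sup>* b z}"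
  define S where "S = {s \<in> V - B. \<exists>y\<in>B. E s y}"
  define A where "A = V - S - B"
  have bW: "b \<in> W" using ab b unfolding W_def nbhd_def by auto
  have BW: "B \<subseteq> W"
  proof
    fix z assume "z \<in> B"
    then have "(induced W E)\<^sup>*\<^sup>* b z" unfolding B_def by simp
    then show "z \<in> W" using bW by (cases rule: rtranclp.cases) (auto simp: induced_def)
  qed
  have bB: "b \<in> B" unfolding B_def by simp
  have B_closed: "z \<in> B" if "y \<in> B" "z \<in> W" "E y z" for y z
    using that BW unfolding B_def induced_def by (auto intro: rtranclp.rtrancl_into_rtrancl)
  have naB: "\<forall>z\<in>B. \<not> E a z" and aB: "a \<notin> B" using BW unfolding W_def nbhd_def by auto
  have Sa: "E a s" if "s \<in> S" for s
  proof -
    obtain y where y: "y \<in> B" "E s y" "s \<in> V" "s \<notin> B" using \<open>s \<in> S\<close> unfolding S_def by blast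
    have "s \<notin> W" using B_closed[of y s] y graph_symD[OF g y(2)] by blast
    moreover have "s \<noteq> a" using y naB by auto
    ultimately show ?thesis using y(3) unfolding W_def nbhd_def by auto
  qed
  have B_reach: "(induced B E)\<^sup>*\<^sup>* y z" if "y \<in> B" "z \<in> B" for y z
  proof -
    have "symp (induced B E)" unfolding induced_def symp_def using graph_symD[OF g] by blast
    then have "symp (induced B E)\<^sup>*\<^sup>*" by (rule symp_rtranclp)
    moreover have "(induced B E)\<^sup>*\<^sup>* b y" "(induced B E)\<^sup>*\<^sup>* b z"
      using that rtranclp_induced_reachable unfolding B_def by fastforce+
    ultimately show ?thesis by (metis rtranclp_trans sympD)
  qed
  have "is_clique E S"
    unfolding is_clique_def
  proof (intro ballI impI)
    fix x y assume x: "x \<in> S" and y: "y \<in> S" and "x \<noteq> y"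
    obtain xb yb where xb: "xb \<in> B" "E x xb" and yb: "yb \<in> B" "E y yb"
      using x y unfolding S_def by blast
    obtain k p where "walk_via E B x yb (Suc k) p"
      using rtranclp_induced_imp_walk_via[OF B_reach[OF xb(1) yb(1)] xb(2)] by blast
    from walk_via_snoc[OF this graph_symD[OF g yb(2)]] yb(1)
    have "walk_via E B x y (Suc (Suc k)) (p(Suc (Suc k) := y))" by blast
    moreover have "x \<notin> B" "y \<notin> B" using x y unfolding S_def by auto
    ultimately show "E x y"
      using chordal_walk_via_imp_adjacent[OF g ch a aB naB Sa[OF x] Sa[OF y]] \<open>x \<noteq> y\<close> by blast
  qed
  moreover have "V = A \<union> S \<union> B" using BW unfolding A_def S_def W_def by auto
  moreover have "a \<in> A" using Sa graph_irreflD[OF g] aB a unfolding A_def by blast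
  moreover have "\<forall>u\<in>A. \<forall>w\<in>B. \<not> E u w" unfolding A_def S_def by blast
  moreover have "A \<inter> S = {}" "A \<inter> B = {}" "S \<inter> B = {}" unfolding A_def S_def by auto
  ultimately show thesis using that bB by blast
qed

lemma chordal_simplicial_outside_clique:
  assumes "graph V E" "chordal V E" "is_clique E K" "K \<subset> V"
  shows "\<exists>x\<in>V - K. is_clique E (nbhd E x)"
  using assms
proof (induction "card V" arbitrary: V E K rule: less_induct)
  case less
  note g = less.prems(1) and ch = less.prems(2) and K = less.prems(3-4)
  \<comment> \<open>A simplicial vertex of G[X \<union> S] outside S has all its neighbours in X \<union> S.\<close>
  have side: "\<exists>x\<in>X. is_clique E (nbhd E x)"
    if VX: "V = X \<union> S \<union> Y" and disj: "X \<inter> S = {}" "X \<inter> Y = {}" "S \<inter> Y = {}"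
      and ne: "X \<noteq> {}" "Y \<noteq> {}"
      and noE: "\<forall>u\<in>X. \<forall>w\<in>Y. \<not> E u w" and S: "is_clique E S" for X S Y
  proof -
    define W where "W = X \<union> S"
    have WV: "W \<subseteq> V" using VX unfolding W_def by blast
    have "W \<subset> V" using WV disj(2,3) ne(2) VX unfolding W_def by blast
    then have "card W < card V" using graph_finite[OF g] by (simp add: psubset_card_mono)
    moreover have "is_clique (induced W E) S" using S is_clique_induced_iff[of S W] W_def by blast
    moreover have "S \<subset> W" using disj ne(1) unfolding W_def by blast
    ultimately obtain x where x: "x \<in> W - S" "is_clique (induced W E) (nbhd (induced W E) x)"
      using less.hyps[of W] graph_induced[OF g WV] chordal_induced[OF ch WV] by blast
    have xX: "x \<in> X" using x(1) unfolding W_def by blast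
    have "nbhd E x \<subseteq> W"
      using xX noE VX graph_edgeD[OF g] unfolding W_def nbhd_def by blast
    then have "is_clique E (nbhd E x)"
      using x nbhd_induced[of x W E] is_clique_induced_iff by fastforce
    with xX show ?thesis by blast
  qed
  show ?case
  proof (cases "\<forall>u\<in>V. \<forall>w\<in>V. u \<noteq> w \<longrightarrow> E u w")
    case True
    obtain x where "x \<in> V - K" using K by blast
    moreover have "is_clique E (nbhd E x)"
      using True graph_edgeD[OF g] unfolding is_clique_def nbhd_def by blast
    ultimately show ?thesis by blast
  next
    case False
    then obtain a b where ab: "a \<in> V" "b \<in> V" "a \<noteq> b" "\<not> E a b" by blast
    then obtain A S B where sep: "V = A \<union> S \<union> B" "A \<inter> S = {}" "A \<inter> B = {}" "S \<inter> B = {}"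
      "a \<in> A" "b \<in> B" "\<forall>u\<in>A. \<forall>w\<in>B. \<not> E u w" "is_clique E S"
      using chordal_clique_separator[OF g ch] by metis
    have "K \<inter> A = {} \<or> K \<inter> B = {}"
    proof (rule ccontr)
      assume "\<not> ?thesis"
      then obtain u w where "u \<in> K \<inter> A" "w \<in> K \<inter> B" by blast
      then show False using K(1) sep(3,7) unfolding is_clique_def by fastforce
    qed
    then show ?thesis
    proof
      assume "K \<inter> A = {}"
      then show ?thesis using side[of A S B] sep by auto
    next
      assume "K \<inter> B = {}"
      have "V = B \<union> S \<union> A" using sep(1) by blast
      moreover have "\<forall>u\<in>B. \<forall>w\<in>A. \<not> E u w" using sep(7) graph_symD[OF g] by blast
      ultimately obtain x where "x \<in> B" "is_clique E (nbhd E x)"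
        using side[of B S A] sep(2-6,8) by blast
      with \<open>K \<inter> B = {}\<close> sep(1) show ?thesis by blast
    qed
  qed
qed

section \<open>Perfect elimination orderings\<close>

definition left_nbrs :: "'a set \<Rightarrow> ('a \<Rightarrow> 'a \<Rightarrow> bool) \<Rightarrow> (nat \<Rightarrow> 'a) \<Rightarrow> nat \<Rightarrow> 'a set" where
  "left_nbrs V E \<sigma> i = {\<sigma> j | j. j \<in> {1..card V} \<and> j < i \<and> E (\<sigma> i) (\<sigma> j)}"

lemma peo_iff:
  "peo V E \<sigma> \<longleftrightarrow> vertex_ordering V \<sigma> \<and> (\<forall>i\<in>{1..card V}. is_clique E (left_nbrs V E \<sigma> i))"
  unfolding peo_def left_nbrs_def ..

lemma vertex_ordering_bij: "vertex_ordering V \<sigma> \<Longrightarrow> inj_on \<sigma> {1..card V} \<and> \<sigma> ` {1..card V} = V"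
  unfolding vertex_ordering_def bij_betw_def by blast

lemma vertex_ordering_insert:
  assumes "vertex_ordering W \<tau>" "finite W" "x \<notin> W"
  shows "vertex_ordering (insert x W) (\<tau>(Suc (card W) := x))"
proof -
  let ?\<sigma> = "\<tau>(Suc (card W) := x)"
  have "bij_betw ?\<sigma> {1..card W} W"
    using assms(1) bij_betw_cong[of "{1..card W}" ?\<sigma> \<tau>] unfolding vertex_ordering_def by simp
  then have "bij_betw ?\<sigma> ({1..card W} \<union> {Suc (card W)}) (W \<union> {?\<sigma> (Suc (card W))})"
    using assms(3) by (intro notIn_Un_bij_betw) auto
  moreover have "{1..card W} \<union> {Suc (card W)} = {1..card (insert x W)}"
    using assms(2,3) by auto
  ultimately show ?thesis unfolding vertex_ordering_def by simp
qed

lemma peo_insert_simplicial: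
  assumes fin: "finite W" and x: "x \<notin> W" and peo: "peo W (induced W E) \<tau>"
    and simplicial: "is_clique E (nbhd E x)"
  shows "peo (insert x W) E (\<tau>(Suc (card W) := x))"
  unfolding peo_iff
proof (intro conjI ballI)
  let ?\<sigma> = "\<tau>(Suc (card W) := x)"
  have "vertex_ordering W \<tau>" using peo unfolding peo_iff by blast
  from vertex_ordering_insert[OF this fin x] show "vertex_ordering (insert x W) ?\<sigma>" .
  have \<tau>W: "\<tau> j \<in> W" if "j \<in> {1..card W}" for j
    using peo that unfolding peo_iff vertex_ordering_def by (meson bij_betwE)
  fix i assume i: "i \<in> {1..card (insert x W)}"
  then consider "i \<in> {1..card W}" | "i = Suc (card W)" using fin x by (auto simp: le_Suc_eq)
  then show "is_clique E (left_nbrs (insert x W) E ?\<sigma> i)"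
  proof cases
    case 1
    have "left_nbrs (insert x W) E ?\<sigma> i \<subseteq> left_nbrs W (induced W E) \<tau> i"
    proof
      fix u assume "u \<in> left_nbrs (insert x W) E ?\<sigma> i"
      then obtain j where j: "u = ?\<sigma> j" "j \<in> {1..card (insert x W)}" "j < i" "E (?\<sigma> i) (?\<sigma> j)"
        unfolding left_nbrs_def by blast
      then have "j \<in> {1..card W}" using 1 by auto
      then show "u \<in> left_nbrs W (induced W E) \<tau> i"
        using j 1 \<tau>W unfolding left_nbrs_def induced_def by auto
    qed
    moreover have "is_clique E (left_nbrs W (induced W E) \<tau> i)"
    proof -
      have "left_nbrs W (induced W E) \<tau> i \<subseteq> W" using \<tau>W unfolding left_nbrs_def by blast
      moreover have "is_clique (induced W E) (left_nbrs W (induced W E) \<tau> i)"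
        using peo 1 unfolding peo_iff by blast
      ultimately show ?thesis using is_clique_induced_iff by blast
    qed
    ultimately show ?thesis using is_clique_subset by blast
  next
    case 2
    then have "left_nbrs (insert x W) E ?\<sigma> i \<subseteq> nbhd E x"
      unfolding left_nbrs_def nbhd_def by auto
    then show ?thesis using simplicial is_clique_subset by blast
  qed
qed

lemma chordal_ex_peo_extending:
  assumes "graph V E" "chordal V E" "vertex_ordering K \<tau>" "K \<subseteq> V" "is_clique E K"
  shows "\<exists>\<sigma>. peo V E \<sigma> \<and> (\<forall>i\<in>{1..card K}. \<sigma> i = \<tau> i)"
  using assms
proof (induction "card V" arbitrary: V E rule: less_induct)
  case less
  note g = less.prems(1) and ch = less.prems(2) and \<tau> = less.prems(3) and K = less.prems(4-5)
  show ?case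
  proof (cases "K = V")
    case True
    have "left_nbrs V E \<tau> i \<subseteq> K" for i
      using \<tau> True unfolding left_nbrs_def vertex_ordering_def bij_betw_def by blast
    then have "is_clique E (left_nbrs V E \<tau> i)" for i using K(2) is_clique_subset by blast
    then show ?thesis using \<tau> True unfolding peo_iff by blast
  next
    case False
    then obtain x where x: "x \<in> V - K" "is_clique E (nbhd E x)"
      using chordal_simplicial_outside_clique[OF g ch K(2)] K(1) by blast
    define W where "W = V - {x}"
    have WV: "W \<subseteq> V" and xW: "x \<notin> W" and VW: "V = insert x W" and KW: "K \<subseteq> W"
      using x K unfolding W_def by auto
    have fin: "finite W" using graph_finite[OF g] WV finite_subset by blast
    have cardV: "card V = Suc (card W)" using VW fin xW by simp
    have "card W < card V" using cardV by simp
    moreover have "is_clique (induced W E) K" using is_clique_induced_iff[OF KW] K(2) by blast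
    ultimately obtain \<sigma> where \<sigma>: "peo W (induced W E) \<sigma>" "\<forall>i\<in>{1..card K}. \<sigma> i = \<tau> i"
      using less.hyps[OF _ graph_induced[OF g WV] chordal_induced[OF ch WV] \<tau> KW] by blast
    have "card K \<le> card W" using KW fin by (simp add: card_mono)
    then have "\<forall>i\<in>{1..card K}. (\<sigma>(Suc (card W) := x)) i = \<tau> i" using \<sigma>(2) by auto
    moreover have "peo V E (\<sigma>(Suc (card W) := x))"
      using peo_insert_simplicial[OF fin xW \<sigma>(1) x(2)] VW by simp
    ultimately show ?thesis by blast
  qed
qed

lemma chordal_ex_peo_clique_prefix:
  assumes g: "graph V E" and ch: "chordal V E" and C: "C \<subseteq> V" "is_clique E C"
  shows "\<exists>\<sigma>. peo V E \<sigma> \<and> \<sigma> ` {1..card C} = C"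
proof -
  obtain \<tau> where \<tau>: "vertex_ordering C \<tau>"
    using ex_bij_betw_nat_finite_1 finite_subset[OF C(1) graph_finite[OF g]]
    unfolding vertex_ordering_def by blast
  then obtain \<sigma> where "peo V E \<sigma>" "\<forall>i\<in>{1..card C}. \<sigma> i = \<tau> i"
    using chordal_ex_peo_extending[OF g ch _ C] by blast
  moreover have "\<sigma> ` {1..card C} = \<tau> ` {1..card C}"
    using calculation(2) by (intro image_cong) simp_all
  ultimately show ?thesis using \<tau> vertex_ordering_bij by metis
qed

lemma peo_prefix_connected:
  assumes g: "graph V E" and con: "connected_graph V E" and peo: "peo V E \<sigma>"
    and k: "1 \<le> k" "k \<le> card V"
  shows "connected_graph (\<sigma> ` {1..k}) (induced (\<sigma> ` {1..k}) E)"
proof -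
  have bij: "bij_betw \<sigma> {1..card V} V" using peo unfolding peo_iff vertex_ordering_def by blast
  show ?thesis
  proof (induction rule: inc_induct[OF k(2)])
    case 1
    then show ?case using con bij induced_graph_eq[OF g] unfolding bij_betw_def by simp
  next
    case (2 n)
    define P where "P = \<sigma> ` {1..Suc n}"
    have PV: "P \<subseteq> V" using bij 2(2) unfolding P_def bij_betw_def by auto
    have "nbhd (induced P E) (\<sigma> (Suc n)) \<subseteq> left_nbrs V E \<sigma> (Suc n)"
    proof
      fix u assume "u \<in> nbhd (induced P E) (\<sigma> (Suc n))"
      then obtain j where j: "j \<in> {1..Suc n}" "u = \<sigma> j" "E (\<sigma> (Suc n)) (\<sigma> j)"
        unfolding nbhd_def induced_def P_def by auto
      then have "j \<noteq> Suc n" using graph_irreflD[OF g] by auto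
      then show "u \<in> left_nbrs V E \<sigma> (Suc n)"
        using j 2(2) unfolding left_nbrs_def by auto
    qed
    moreover have "is_clique E (left_nbrs V E \<sigma> (Suc n))"
      using peo 2(2) unfolding peo_iff by simp
    moreover have "nbhd (induced P E) (\<sigma> (Suc n)) \<subseteq> P"
      unfolding nbhd_def induced_def by blast
    ultimately have "is_clique (induced P E) (nbhd (induced P E) (\<sigma> (Suc n)))"
      using is_clique_subset is_clique_induced_iff by metis
    from graph_remove_simplicial_connected[OF graph_induced[OF g PV] 2(3)[folded P_def] this]
    have "connected_graph (P - {\<sigma> (Suc n)}) (induced (P - {\<sigma> (Suc n)}) E)"
      using induced_induced[of "P - {\<sigma> (Suc n)}" P E] by auto
    moreover have "P - {\<sigma> (Suc n)} = \<sigma> ` {1..n}"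
    proof -
      have "inj_on \<sigma> {1..Suc n}" using bij 2(2) inj_on_subset unfolding bij_betw_def by fastforce
      then show ?thesis unfolding P_def using 2(1) k(1)
        by (auto simp: atLeastAtMostSuc_conv inj_on_image_set_diff)
    qed
    ultimately show ?case by simp
  qed
qed

lemma peo_left_nbr_exists:
  assumes g: "graph V E" and con: "connected_graph V E" and peo: "peo V E \<sigma>"
    and i: "2 \<le> i" "i \<le> card V"
  shows "\<exists>j\<in>{1..card V}. j < i \<and> E (\<sigma> i) (\<sigma> j)"
proof -
  define P where "P = \<sigma> ` {1..i}"
  have inj: "inj_on \<sigma> {1..card V}" using peo vertex_ordering_bij unfolding peo_iff by blast
  have "\<sigma> i \<noteq> \<sigma> 1" using inj_onD[OF inj] i by fastforce
  moreover have "\<sigma> i \<in> P" "\<sigma> 1 \<in> P" using i unfolding P_def by auto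
  ultimately have "(induced P E)\<^sup>*\<^sup>* (\<sigma> i) (\<sigma> 1)"
    using peo_prefix_connected[OF g con peo _ i(2)] i(1) unfolding P_def connected_graph_def by auto
  then obtain y where "induced P E (\<sigma> i) y"
    using \<open>\<sigma> i \<noteq> \<sigma> 1\<close> by (cases rule: converse_rtranclpE) auto
  then obtain j where j: "j \<in> {1..i}" "y = \<sigma> j" "E (\<sigma> i) (\<sigma> j)"
    unfolding induced_def P_def by auto
  then have "j \<noteq> i" using graph_irreflD[OF g] by auto
  with j i show ?thesis by (intro bexI[of _ j]) auto
qed

section \<open>Leaves of the F-tree\<close>

definition leftmost_pos :: "'a set \<Rightarrow> ('a \<Rightarrow> 'a \<Rightarrow> bool) \<Rightarrow> (nat \<Rightarrow> 'a) \<Rightarrow> 'a \<Rightarrow> nat" where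
  "leftmost_pos V E \<sigma> w = (LEAST j. j \<in> {1..card V} \<and> E w (\<sigma> j))"

lemma leftmost_nbr_eq: "leftmost_nbr V E \<sigma> w = \<sigma> (leftmost_pos V E \<sigma> w)"
  unfolding leftmost_nbr_def leftmost_pos_def ..

lemma leftmost_pos_least:
  assumes "j \<in> {1..card V}" "E w (\<sigma> j)"
  shows "leftmost_pos V E \<sigma> w \<in> {1..card V}" "E w (\<sigma> (leftmost_pos V E \<sigma> w))"
    "leftmost_pos V E \<sigma> w \<le> j"
  using LeastI[of "\<lambda>j. j \<in> {1..card V} \<and> E w (\<sigma> j)" j]
    Least_le[of "\<lambda>j. j \<in> {1..card V} \<and> E w (\<sigma> j)" j] assms
  unfolding leftmost_pos_def by auto

lemma F_branch_leaf_iff: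
  assumes "v \<in> V" "v \<noteq> \<sigma> 1"
  shows "F_branch_leaf V E \<sigma> v \<longleftrightarrow>
    (\<forall>w\<in>V. w \<noteq> \<sigma> 1 \<longrightarrow> leftmost_nbr V E \<sigma> w = v \<longrightarrow> w = leftmost_nbr V E \<sigma> v)"
proof -
  let ?l = "leftmost_nbr V E \<sigma>" and ?S = "{e \<in> F_tree_edges V E \<sigma>. v \<in> e}"
  have v_edge: "{v, ?l v} \<in> ?S" using assms unfolding F_tree_edges_def by blast
  have "card ?S = 1 \<longleftrightarrow> ?S = {{v, ?l v}}"
  proof
    assume "card ?S = 1"
    then obtain e where "?S = {e}" by (rule card_1_singletonE)
    with v_edge show "?S = {{v, ?l v}}" by simp
  qed simp
  also have "\<dots> \<longleftrightarrow> (\<forall>e\<in>?S. e = {v, ?l v})"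
    using v_edge by blast
  also have "\<dots> \<longleftrightarrow> (\<forall>w\<in>V. w \<noteq> \<sigma> 1 \<longrightarrow> v \<in> {w, ?l w} \<longrightarrow> {w, ?l w} = {v, ?l v})"
  proof -
    have "?S = (\<lambda>w. {w, ?l w}) ` {w \<in> V. w \<noteq> \<sigma> 1 \<and> v \<in> {w, ?l w}}"
      unfolding F_tree_edges_def by auto
    then show ?thesis by (simp only: ball_simps) blast
  qed
  also have "\<dots> \<longleftrightarrow> (\<forall>w\<in>V. w \<noteq> \<sigma> 1 \<longrightarrow> ?l w = v \<longrightarrow> w = ?l v)"
  proof -
    have "(v \<in> {w, l w} \<longrightarrow> {w, l w} = {v, l v}) \<longleftrightarrow> (l w = v \<longrightarrow> w = l v)"
      for w and l :: "'a \<Rightarrow> 'a"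
      by (cases "w = v") (auto simp: doubleton_eq_iff)
    then show ?thesis by (simp only:)
  qed
  finally show ?thesis using assms unfolding F_branch_leaf_def by blast
qed

lemma F_branch_leaf_later_nbr_leftmost_pos:
  assumes g: "graph V E" and con: "connected_graph V E" and peo: "peo V E \<sigma>"
    and leaf: "F_branch_leaf V E \<sigma> v" and i: "i \<in> {1..card V}" "\<sigma> i = v"
    and k: "k \<in> {1..card V}" "i < k" "E (\<sigma> k) v"
  shows "leftmost_pos V E \<sigma> (\<sigma> k) < i"
proof -
  let ?n = "card V" and ?L = "leftmost_pos V E \<sigma>"
  have inj: "inj_on \<sigma> {1..?n}" and img: "\<sigma> ` {1..?n} = V"
    using peo vertex_ordering_bij unfolding peo_iff by blast+
  have vV: "v \<in> V" and v1: "v \<noteq> \<sigma> 1" using leaf unfolding F_branch_leaf_def by auto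
  have i2: "2 \<le> i" using i v1 by (cases "i = 1") auto
  obtain j where j: "j \<in> {1..?n}" "j < i" "E v (\<sigma> j)"
    using peo_left_nbr_exists[OF g con peo i2] i by auto
  have Lv: "?L v \<in> {1..?n}" "?L v < i"
    using leftmost_pos_least[of j V E v \<sigma>] j by auto
  have "?L (\<sigma> k) \<le> i" using leftmost_pos_least[of i V E "\<sigma> k" \<sigma>] i k by auto
  moreover have "?L (\<sigma> k) \<noteq> i"
  proof
    assume "?L (\<sigma> k) = i"
    then have "leftmost_nbr V E \<sigma> (\<sigma> k) = v" using i by (simp add: leftmost_nbr_eq)
    moreover have "\<sigma> k \<noteq> \<sigma> 1" using inj_onD[OF inj, of k 1] k i2 by auto
    moreover have "\<sigma> k \<in> V" using k(1) img by blast
    ultimately have "\<sigma> k = leftmost_nbr V E \<sigma> v"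
      using leaf F_branch_leaf_iff[where \<sigma> = \<sigma> and E = E, OF vV v1] by blast
    then have "k = ?L v" using inj_onD[OF inj] k(1) Lv(1) by (simp add: leftmost_nbr_eq)
    then show False using Lv(2) k(2) by simp
  qed
  ultimately show ?thesis by simp
qed

lemma F_branch_leaf_left_nbrs_dominating:
  assumes g: "graph V E" and con: "connected_graph V E" and peo: "peo V E \<sigma>"
    and leaf: "F_branch_leaf V E \<sigma> v" and i: "i \<in> {1..card V}" "\<sigma> i = v"
  shows "dominating_clique (nbhd E v) E (left_nbrs V E \<sigma> i)"
  unfolding dominating_clique_def
proof (intro conjI ballI)
  let ?n = "card V" and ?C = "left_nbrs V E \<sigma> i"
  have inj: "inj_on \<sigma> {1..?n}" and img: "\<sigma> ` {1..?n} = V"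
    using peo vertex_ordering_bij unfolding peo_iff by blast+
  show "?C \<subseteq> nbhd E v" using i unfolding left_nbrs_def nbhd_def by auto
  show "is_clique E ?C" using peo i unfolding peo_iff by blast
  fix u assume "u \<in> nbhd E v"
  then have vu: "E v u" unfolding nbhd_def by simp
  then have "u \<in> \<sigma> ` {1..?n}" using graph_edgeD[OF g vu] img by simp
  then obtain k where k: "k \<in> {1..?n}" "\<sigma> k = u" by blast
  consider "k < i" | "k = i" | "i < k" by linarith
  then show "u \<in> ?C \<or> (\<exists>c\<in>?C. E u c)"
  proof cases
    case 1
    then show ?thesis using k i vu unfolding left_nbrs_def by auto
  next
    case 2
    then show ?thesis using k i vu graph_irreflD[OF g] by auto
  next
    case 3
    define L where "L = leftmost_pos V E \<sigma> u"
    have uv: "E u (\<sigma> i)" using graph_symD[OF g vu] i by simp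
    have L: "L \<in> {1..?n}" "E u (\<sigma> L)"
      using leftmost_pos_least[of i V E u \<sigma>, OF i(1) uv] unfolding L_def by auto
    have "L < i"
      using F_branch_leaf_later_nbr_leftmost_pos[OF g con peo leaf i k(1) 3] uv i k
      unfolding L_def by simp
    have "\<sigma> L \<in> left_nbrs V E \<sigma> k" "v \<in> left_nbrs V E \<sigma> k"
      using L \<open>L < i\<close> 3 k i uv unfolding left_nbrs_def by auto
    moreover have "\<sigma> L \<noteq> v" using inj_onD[OF inj] L(1) i \<open>L < i\<close> by fastforce
    moreover have "is_clique E (left_nbrs V E \<sigma> k)" using peo k(1) unfolding peo_iff by blast
    ultimately have "E v (\<sigma> L)" using graph_symD[OF g] unfolding is_clique_def by blast
    then have "\<sigma> L \<in> ?C" using L(1) \<open>L < i\<close> i unfolding left_nbrs_def by auto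
    with L(2) k show ?thesis by blast
  qed
qed

lemma dominating_clique_prefix_imp_F_branch_leaf:
  assumes g: "graph V E" and \<sigma>: "vertex_ordering V \<sigma>"
    and nbr: "\<And>w. w \<in> V \<Longrightarrow> \<exists>z. E w z"
      \<comment> \<open>for an isolated w, leftmost_nbr is \<sigma> applied to the LEAST of an empty set,
        which may well be v\<close>
    and v: "v \<in> V" and dom: "dominating_clique (nbhd E v) E C" and C: "C \<noteq> {}"
    and prefix: "\<sigma> ` {1..card C} = C"
  shows "F_branch_leaf V E \<sigma> v"
proof -
  let ?n = "card V"
  have img: "\<sigma> ` {1..?n} = V" using \<sigma> vertex_ordering_bij by blast
  have Cv: "C \<subseteq> nbhd E v" and Cc: "is_clique E C"
    and Cdom: "\<forall>w\<in>nbhd E v. w \<in> C \<or> (\<exists>c\<in>C. E w c)"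
    using dom unfolding dominating_clique_def by auto
  have CV: "C \<subseteq> V" using Cv graph_edgeD[OF g] unfolding nbhd_def by blast
  then have "card C \<le> ?n" "1 \<le> card C"
    using graph_finite[OF g] C card_mono finite_subset by (fastforce simp: Suc_le_eq card_gt_0_iff)+
  then have prefix_pos: "\<sigma> j \<in> C" if "j \<in> {1..card C}" for j using prefix that by blast
  have vC: "v \<notin> C" using Cv graph_irreflD[OF g] unfolding nbhd_def by blast
  have \<sigma>1: "\<sigma> 1 \<in> C" using prefix_pos \<open>1 \<le> card C\<close> by simp
  have "leftmost_nbr V E \<sigma> w \<noteq> v" if w: "w \<in> V" "w \<noteq> \<sigma> 1" for w
  proof
    assume lw: "leftmost_nbr V E \<sigma> w = v"
    obtain z where "E w z" using nbr w(1) by blast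
    moreover have "z \<in> \<sigma> ` {1..?n}" using graph_edgeD[OF g \<open>E w z\<close>] img by simp
    ultimately obtain jz where "jz \<in> {1..?n}" "E w (\<sigma> jz)" by blast
    then have "E w (\<sigma> (leftmost_pos V E \<sigma> w))" by (rule leftmost_pos_least)
    then have "E w v" using lw by (simp add: leftmost_nbr_eq)
    then have "w \<in> nbhd E v" using graph_symD[OF g] unfolding nbhd_def by blast
    then obtain c where c: "c \<in> C" "E w c"
      using Cdom Cc \<sigma>1 w(2) unfolding is_clique_def by metis
    from c(1) have "c \<in> \<sigma> ` {1..card C}" using prefix by simp
    then obtain t where t: "t \<in> {1..card C}" "\<sigma> t = c" by blast
    have "leftmost_pos V E \<sigma> w \<in> {1..?n}" "leftmost_pos V E \<sigma> w \<le> t"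
      using leftmost_pos_least[of t V E w \<sigma>] t c \<open>card C \<le> ?n\<close> by auto
    then have "\<sigma> (leftmost_pos V E \<sigma> w) \<in> C" using prefix_pos t(1) by auto
    then show False using lw leftmost_nbr_eq vC by metis
  qed
  moreover have "v \<noteq> \<sigma> 1" using \<sigma>1 vC by blast
  ultimately show ?thesis using F_branch_leaf_iff[where \<sigma> = \<sigma> and E = E, OF v] by blast
qed

theorem theorem10:
  fixes V :: "'a set" and E :: "'a \<Rightarrow> 'a \<Rightarrow> bool" and v :: 'a
  assumes "graph V E" and "connected_graph V E" and "chordal V E"
    and "card V \<ge> 2" and "v \<in> V"
  shows "(\<exists>\<sigma>. peo V E \<sigma> \<and> F_branch_leaf V E \<sigma> v) \<longleftrightarrow>
         has_dominating_clique (nbhd E v) E"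
proof
  assume "\<exists>\<sigma>. peo V E \<sigma> \<and> F_branch_leaf V E \<sigma> v"
  then obtain \<sigma> where peo: "peo V E \<sigma>" and leaf: "F_branch_leaf V E \<sigma> v" by blast
  have "v \<in> \<sigma> ` {1..card V}" using peo assms(5) vertex_ordering_bij unfolding peo_iff by blast
  then obtain i where "i \<in> {1..card V}" "\<sigma> i = v" by blast
  with F_branch_leaf_left_nbrs_dominating[OF assms(1,2) peo leaf]
  show "has_dominating_clique (nbhd E v) E" unfolding has_dominating_clique_def by blast
next
  assume "has_dominating_clique (nbhd E v) E"
  then obtain C where dom: "dominating_clique (nbhd E v) E C"
    unfolding has_dominating_clique_def by blast
  have nbr: "\<exists>z. E w z" if "w \<in> V" for w
    using connected_graph_ex_nbr[OF assms(2,4) that] .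
  have "C \<subseteq> V" "is_clique E C" "C \<noteq> {}"
    using dom nbr[OF assms(5)] graph_edgeD[OF assms(1)]
    unfolding dominating_clique_def nbhd_def by blast+
  then obtain \<sigma> where "peo V E \<sigma>" "\<sigma> ` {1..card C} = C"
    using chordal_ex_peo_clique_prefix[OF assms(1,3)] by blast
  with dominating_clique_prefix_imp_F_branch_leaf[OF assms(1) _ nbr assms(5) dom \<open>C \<noteq> {}\<close>]
  show "\<exists>\<sigma>. peo V E \<sigma> \<and> F_branch_leaf V E \<sigma> v" unfolding peo_iff by blast
qed

end
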